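(* Let $k\ge3$ be an integer and let $I=(a_1,\dots,a_n)\in(0,1]^n$ with $n\le k$ and $\sum_{i=1}^n a_i\le1$. Then $w_2(I):=\sum_{i=1}^n w_2(a_i)\le\lambda_k-\frac1k$.
   Context: Define $\pi_1=2$, $\pi_{i+1}=\pi_i(\pi_i-1)+1$ for $i\ge1$, and $\lambda_j=\sum_{i=1}^j\max\{\frac{1}{\pi_i-1},\frac1j\}$ for $j\ge1$. For fixed $k$, the weight function $w_2:(0,1]\to\mathbb{R}$ is $w_2(x)=1-\frac1k$ for $x\in(\frac12,1]$; $w_2(x)=\frac1j$ for $x\in(\frac{1}{j+1},\frac1j]$, $j=2,\dots,k-1$; and $w_2(x)=\frac1k$ for $x\in(0,\frac1k]$. *)

theory Defs
  imports Complex_Main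
begin

(* Sylvester-type sequence: sylv 1 = 2, sylv (i+1) = sylv i * (sylv i - 1) + 1.
   The value at index 0 is an unused dummy. *)
fun sylv :: "nat \<Rightarrow> nat" where
  "sylv 0 = 1"
| "sylv (Suc 0) = 2"
| "sylv (Suc (Suc i)) = sylv (Suc i) * (sylv (Suc i) - 1) + 1"

definition lam :: "nat \<Rightarrow> real" where
  "lam j = (\<Sum>i=1..j. max (1 / (real (sylv i) - 1)) (1 / real j))"

definition w2 :: "nat \<Rightarrow> real \<Rightarrow> real" where
  "w2 k x =
     (if 1/2 < x then 1 - 1 / real k
      else if x \<le> 1 / real k then 1 / real k
      else 1 / real (THE j::nat. 2 \<le> j \<and> j \<le> k - 1 \<and>
                          1 / real (j + 1) < x \<and> x \<le> 1 / real j))"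

end

theory Submission
  imports Defs
begin

text \<open>
  For an item \<open>a\<close> let \<open>j = \<lfloor>1/a\<rfloor>\<close>. Then \<open>w\<^sub>2(a) = 1/k + max 0 (1/j - 1/k)\<close>, except that
  items above \<open>1/2\<close> do not get the \<open>1/k\<close>, and \<open>\<lambda>\<^sub>k = 1 + \<Sum>\<^bsub>i=1..k\<^esub> g\<^sub>i\<close> with
  \<open>g\<^sub>i = max 0 (1/(\<pi>\<^sub>i - 1) - 1/k)\<close>. The heart of the proof is a greedy bound: items of total
  size at most \<open>1/(\<pi>\<^sub>t - 1)\<close> have total excess \<open>max 0 (1/j - 1/k)\<close> at most \<open>\<Sum>\<^bsub>i=t..k\<^esub> g\<^sub>i\<close>.
  With \<open>p = \<pi>\<^sub>t - 1\<close> every item has \<open>j \<ge> p\<close>. If some item has \<open>j = p\<close>, it exceeds \<open>1/(p+1)\<close>,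
  so the others have total size below \<open>1/(p(p+1)) = 1/(\<pi>\<^bsub>t+1\<^esub> - 1)\<close> and induction applies.
  Otherwise one item contributes at most \<open>1/(p+1) - 1/k\<close>, and two or more contribute at most
  \<open>(1 + 1/(p+1))/p - 2/k\<close> because \<open>1/j < (1 + 1/j) a\<close>; either way this is at most \<open>g\<^sub>t + g\<^bsub>t+1\<^esub>\<close>.
  Finally, the \<open>1/k\<close>'s add up to at most \<open>1 - 1/k\<close> unless all \<open>k\<close> items are at most \<open>1/2\<close>,
  and in that case the same mass argument bounds the total excess by \<open>3/2 - 3/k\<close>.
\<close>

lemma sylv_Suc: "1 \<le> i \<Longrightarrow> sylv (Suc i) = sylv i * (sylv i - 1) + 1"
  by (cases i) auto

lemma sylv_ge_Suc: "1 \<le> i \<Longrightarrow> Suc i \<le> sylv i"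
proof (induction i rule: nat_induct_at_least)
  case base
  then show ?case by simp
next
  case (Suc i)
  then have "sylv i * 1 \<le> sylv i * (sylv i - 1)" by (intro mult_le_mono2) simp
  with Suc sylv_Suc[of i] show ?case by linarith
qed

lemma real_sylv_Suc_minus_one:
  "1 \<le> i \<Longrightarrow> real (sylv (Suc i)) - 1 = (real (sylv i) - 1) * real (sylv i)"
  using sylv_ge_Suc[of i] by (simp add: sylv_Suc algebra_simps)

definition inv_floor :: "real \<Rightarrow> nat" where
  "inv_floor a = nat \<lfloor>1 / a\<rfloor>"

lemma le_inv_floor_iff:
  assumes "0 < a" "0 < q"
  shows "q \<le> inv_floor a \<longleftrightarrow> a \<le> 1 / real q"
proof -
  have "q \<le> inv_floor a \<longleftrightarrow> real q \<le> 1 / a"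
    using assms unfolding inv_floor_def by (simp add: le_nat_iff le_floor_iff)
  also have "\<dots> \<longleftrightarrow> a \<le> 1 / real q"
    using assms by (simp add: field_simps)
  finally show ?thesis .
qed

lemma inv_floor_eq_iff:
  assumes "0 < a" "0 < q"
  shows "inv_floor a = q \<longleftrightarrow> 1 / (real q + 1) < a \<and> a \<le> 1 / real q"
  using le_inv_floor_iff[OF assms] le_inv_floor_iff[OF assms(1), of "Suc q"] assms
  by (auto simp: add.commute)

lemma inv_floor_Suc_less:
  assumes "0 < a"
  shows "1 / (real (inv_floor a) + 1) < a"
proof -
  have "1 / a < real (inv_floor a) + 1"
    using assms unfolding inv_floor_def by linarith
  then show ?thesis using assms by (simp add: field_simps)
qed

definition excess :: "nat \<Rightarrow> real \<Rightarrow> real" where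
  "excess k a = max 0 (1 / real (inv_floor a) - 1 / real k)"

lemma excess_eq_zero:
  assumes "1 \<le> k" "k \<le> inv_floor a"
  shows "excess k a = 0"
  using assms unfolding excess_def by (simp add: frac_le)

lemma excess_le:
  assumes "1 \<le> q" "q \<le> inv_floor a"
  shows "excess k a \<le> max 0 (1 / real q - 1 / real k)"
  using assms unfolding excess_def by (intro max.mono) (simp_all add: frac_le)

lemma excess_le_mass:
  assumes "0 < a" "1 \<le> q" "q \<le> inv_floor a" "inv_floor a < k"
  shows "excess k a \<le> (1 + 1 / real q) * a - 1 / real k"
proof -
  define c where "c = real (inv_floor a)"
  have c: "1 \<le> real q" "real q \<le> c" "c < real k" using assms c_def by auto
  have "1 / (c + 1) < a" using inv_floor_Suc_less[OF assms(1)] c_def by simp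
  then have "1 / c < (1 + 1 / c) * a"
    using c by (simp add: field_simps)
  also have "\<dots> \<le> (1 + 1 / real q) * a"
    using c assms(1) by (intro mult_right_mono) (simp_all add: frac_le)
  finally have "1 / c \<le> (1 + 1 / real q) * a" by simp
  moreover have "excess k a = 1 / c - 1 / real k"
    using c unfolding excess_def c_def[symmetric] by (simp add: frac_le)
  ultimately show ?thesis by simp
qed

lemma w2_eq_excess:
  assumes "3 \<le> k" "0 < a" "a \<le> 1"
  shows "w2 k a = excess k a + (if 1 / 2 < a then 0 else 1 / real k)"
proof -
  consider "1 / 2 < a" | "a \<le> 1 / real k" | "\<not> 1 / 2 < a" "\<not> a \<le> 1 / real k" by blast
  then show ?thesis
  proof cases
    case 1
    then have "inv_floor a = 1" using inv_floor_eq_iff[OF assms(2), of 1] assms(3) by simp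
    then show ?thesis using 1 assms(1) unfolding w2_def excess_def by simp
  next
    case 2
    then have "k \<le> inv_floor a" using le_inv_floor_iff[OF assms(2), of k] assms(1) by simp
    then have "excess k a = 0" using excess_eq_zero assms(1) by simp
    moreover have "1 / real k < 1 / 2" using assms(1) by (simp add: field_simps)
    ultimately show ?thesis using 2 unfolding w2_def by auto
  next
    case 3
    define j where "j = inv_floor a"
    have j: "2 \<le> j" "j < k"
      using 3 le_inv_floor_iff[OF assms(2), of 2] le_inv_floor_iff[OF assms(2), of k] assms(1)
      unfolding j_def by auto
    have "(THE j'. 2 \<le> j' \<and> j' \<le> k - 1 \<and> 1 / real (j' + 1) < a \<and> a \<le> 1 / real j') = j"
    proof (rule the_equality)
      show "2 \<le> j \<and> j \<le> k - 1 \<and> 1 / real (j + 1) < a \<and> a \<le> 1 / real j"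
        using inv_floor_eq_iff[OF assms(2), of j] j unfolding j_def by (simp add: add.commute)
    next
      fix j' assume "2 \<le> j' \<and> j' \<le> k - 1 \<and> 1 / real (j' + 1) < a \<and> a \<le> 1 / real j'"
      then show "j' = j"
        using inv_floor_eq_iff[OF assms(2), of j'] unfolding j_def by (simp add: add.commute)
    qed
    moreover have "excess k a = 1 / real j - 1 / real k"
      using j unfolding excess_def j_def[symmetric] by (simp add: frac_le)
    ultimately show ?thesis using 3 unfolding w2_def by simp
  qed
qed

lemma sum_list_filter_le:
  fixes xs :: "real list"
  assumes "\<forall>a\<in>set xs. 0 \<le> a"
  shows "sum_list (filter P xs) \<le> sum_list xs"
proof -
  have "sum_list (filter P xs) = (\<Sum>a\<leftarrow>xs. if P a then a else 0)"
    using sum_list_map_filter'[of "\<lambda>a. a" P xs] by simp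
  also have "\<dots> \<le> (\<Sum>a\<leftarrow>xs. a)"
    using assms by (intro sum_list_mono) auto
  finally show ?thesis by simp
qed

lemma le_inv_floor_of_sum_list_le:
  assumes "\<forall>a\<in>set xs. 0 < a" "sum_list xs \<le> 1 / real p" "0 < p" "a \<in> set xs"
  shows "p \<le> inv_floor a"
proof -
  have "0 < a" "a \<le> sum_list xs"
    using assms(1,4) by (auto intro: member_le_sum_list less_imp_le)
  then show ?thesis using le_inv_floor_iff[of a p] assms(2,3) by simp
qed

lemma sum_list_remove1_le:
  assumes "x \<in> set xs" "0 < x" "inv_floor x = p" "0 < p" "sum_list xs \<le> 1 / real p"
  shows "sum_list (remove1 x xs) \<le> 1 / (real p * (real p + 1))"
proof -
  have "1 / (real p + 1) < x" using inv_floor_Suc_less[OF assms(2)] assms(3) by simp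
  moreover have "sum_list xs = x + sum_list (remove1 x xs)"
    using sum_list_map_remove1[OF assms(1), of "\<lambda>a. a"] by simp
  ultimately have "sum_list (remove1 x xs) \<le> 1 / real p - 1 / (real p + 1)"
    using assms(5) by simp
  also have "\<dots> = 1 / (real p * (real p + 1))"
    using assms(4) by (simp add: field_simps)
  finally show ?thesis .
qed

lemma sum_excess_filter_active:
  assumes "1 \<le> k"
  shows "sum_list (map (excess k) (filter (\<lambda>a. inv_floor a < k) xs)) = sum_list (map (excess k) xs)"
  using assms excess_eq_zero by (intro sum_list_map_filter) auto

lemma sum_excess_le_length:
  assumes "1 \<le> q" "\<forall>a\<in>set xs. q \<le> inv_floor a"
  shows "sum_list (map (excess k) xs) \<le> real (length xs) * max 0 (1 / real q - 1 / real k)"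
proof -
  have "sum_list (map (excess k) xs) \<le> (\<Sum>a\<leftarrow>xs. max 0 (1 / real q - 1 / real k))"
    using assms excess_le by (intro sum_list_mono) auto
  then show ?thesis by (simp add: sum_list_triv)
qed

lemma sum_excess_le_mass:
  assumes "1 \<le> q" "\<forall>a\<in>set xs. 0 < a \<and> q \<le> inv_floor a \<and> inv_floor a < k"
  shows "sum_list (map (excess k) xs) \<le> (1 + 1 / real q) * sum_list xs - real (length xs) / real k"
proof -
  have "sum_list (map (excess k) xs) \<le> (\<Sum>a\<leftarrow>xs. (1 + 1 / real q) * a - 1 / real k)"
    using assms excess_le_mass by (intro sum_list_mono) auto
  then show ?thesis by (simp add: sum_list_subtractf sum_list_const_mult sum_list_triv)
qed

lemma sum_excess_le_two_terms:
  assumes "1 \<le> k" "1 \<le> p" "\<forall>a\<in>set xs. 0 < a \<and> p < inv_floor a" "sum_list xs \<le> 1 / real p"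
  shows "sum_list (map (excess k) xs)
    \<le> max 0 (1 / real p - 1 / real k) + max 0 (1 / (real p * (real p + 1)) - 1 / real k)"
proof -
  define ys where "ys = filter (\<lambda>a. inv_floor a < k) xs"
  have ys: "\<forall>a\<in>set ys. 0 < a \<and> Suc p \<le> inv_floor a \<and> inv_floor a < k"
    using assms(3) unfolding ys_def by auto
  have "sum_list ys \<le> sum_list xs"
    using assms(3) unfolding ys_def by (intro sum_list_filter_le) auto
  then have sum_ys: "sum_list ys \<le> 1 / real p" using assms(4) by simp
  have "sum_list (map (excess k) xs) = sum_list (map (excess k) ys)"
    using sum_excess_filter_active[OF assms(1)] unfolding ys_def by simp
  also have "\<dots> \<le> max 0 (1 / real p - 1 / real k) + max 0 (1 / (real p * (real p + 1)) - 1 / real k)"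
  proof (cases "length ys \<le> 1")
    case True
    have "sum_list (map (excess k) ys) \<le> real (length ys) * max 0 (1 / (real p + 1) - 1 / real k)"
      using sum_excess_le_length[of "Suc p" ys] ys by (simp add: add.commute)
    also have "\<dots> \<le> max 0 (1 / (real p + 1) - 1 / real k)"
      using True by (intro mult_left_le_one_le) auto
    also have "\<dots> \<le> max 0 (1 / real p - 1 / real k)"
      using assms(2) by (intro max.mono) (simp_all add: frac_le)
    finally show ?thesis by (simp add: add_increasing2)
  next
    case False
    have "sum_list (map (excess k) ys) \<le> (1 + 1 / (real p + 1)) * sum_list ys - real (length ys) / real k"
      using sum_excess_le_mass[of "Suc p" ys] ys by (simp add: add.commute)
    also have "\<dots> \<le> (1 + 1 / (real p + 1)) * (1 / real p) - 2 / real k"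
      using False sum_ys by (intro diff_mono mult_left_mono divide_right_mono) auto
    also have "\<dots> = (1 / real p - 1 / real k) + (1 / (real p * (real p + 1)) - 1 / real k)"
    proof -
      have "0 < real p" using assms(2) by simp
      then show ?thesis by (simp add: divide_simps) (simp add: algebra_simps)
    qed
    finally show ?thesis using add_mono[OF max.cobounded2 max.cobounded2] by (rule order_trans)
  qed
  finally show ?thesis .
qed

definition sylv_excess :: "nat \<Rightarrow> nat \<Rightarrow> real" where
  "sylv_excess k i = max 0 (1 / (real (sylv i) - 1) - 1 / real k)"

lemma sylv_excess_eq_zero:
  assumes "1 \<le> k" "k \<le> i"
  shows "sylv_excess k i = 0"
proof -
  have "real k \<le> real (sylv i) - 1" using sylv_ge_Suc[of i] assms by simp
  then show ?thesis using assms(1) unfolding sylv_excess_def by (simp add: frac_le)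
qed

lemma sum_sylv_excess_split:
  assumes "1 \<le> k" "1 \<le> t"
  shows "(\<Sum>i=t..k. sylv_excess k i) = sylv_excess k t + (\<Sum>i=Suc t..k. sylv_excess k i)"
proof (cases "t \<le> k")
  case True
  then show ?thesis by (simp add: sum.atLeast_Suc_atMost)
next
  case False
  then show ?thesis using sylv_excess_eq_zero assms by simp
qed

lemma sylv_excess_two_le_sum:
  assumes "1 \<le> k" "1 \<le> t"
  shows "sylv_excess k t + sylv_excess k (Suc t) \<le> (\<Sum>i=t..k. sylv_excess k i)"
proof -
  have "0 \<le> (\<Sum>i=Suc (Suc t)..k. sylv_excess k i)"
    by (simp add: sum_nonneg sylv_excess_def)
  then show ?thesis
    using sum_sylv_excess_split[OF assms] sum_sylv_excess_split[of k "Suc t"] assms by simp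
qed

lemma sum_excess_le_sum_sylv_excess:
  assumes "1 \<le> k" "1 \<le> t" "\<forall>a\<in>set xs. 0 < a" "sum_list xs \<le> 1 / (real (sylv t) - 1)"
  shows "sum_list (map (excess k) xs) \<le> (\<Sum>i=t..k. sylv_excess k i)"
  using assms(2-)
proof (induction "length xs" arbitrary: xs t rule: less_induct)
  case less
  define p where "p = sylv t - 1"
  have p: "1 \<le> p" "real p = real (sylv t) - 1"
    using sylv_ge_Suc[OF less.prems(1)] less.prems(1) unfolding p_def by auto
  have sylv_Suc_t: "real (sylv (Suc t)) - 1 = real p * (real p + 1)"
    using real_sylv_Suc_minus_one[OF less.prems(1)] p(2) by simp
  have split: "(\<Sum>i=t..k. sylv_excess k i) = sylv_excess k t + (\<Sum>i=Suc t..k. sylv_excess k i)"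
    using sum_sylv_excess_split assms(1) less.prems(1) by blast
  have sum_xs: "sum_list xs \<le> 1 / real p" using less.prems(3) p(2) by simp
  show ?case
  proof (cases "\<exists>x\<in>set xs. inv_floor x = p")
    case True
    then obtain x where x: "x \<in> set xs" "inv_floor x = p" by blast
    define rest where "rest = remove1 x xs"
    have "sum_list rest \<le> 1 / (real (sylv (Suc t)) - 1)"
      using sum_list_remove1_le[OF x(1) _ x(2)] x(1) less.prems(2) p(1) sum_xs
      unfolding rest_def sylv_Suc_t by simp
    moreover have "length rest < length xs"
      using x(1) length_pos_if_in_set[OF x(1)] unfolding rest_def by (simp add: length_remove1)
    moreover have "\<forall>a\<in>set rest. 0 < a"
      using less.prems(2) set_remove1_subset[of x xs] unfolding rest_def by blast
    ultimately have "sum_list (map (excess k) rest) \<le> (\<Sum>i=Suc t..k. sylv_excess k i)"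
      using less.hyps[of rest "Suc t"] by simp
    moreover have "excess k x = sylv_excess k t"
      unfolding excess_def sylv_excess_def using x(2) p(2) by simp
    ultimately show ?thesis
      using sum_list_map_remove1[OF x(1), of "excess k"] split unfolding rest_def by simp
  next
    case False
    then have "\<forall>a\<in>set xs. 0 < a \<and> p < inv_floor a"
      using le_inv_floor_of_sum_list_le[OF less.prems(2) sum_xs] p(1) less.prems(2)
      by (auto simp: le_neq_implies_less)
    then have "sum_list (map (excess k) xs) \<le> sylv_excess k t + sylv_excess k (Suc t)"
      using sum_excess_le_two_terms[OF assms(1) p(1)] sum_xs
      unfolding sylv_excess_def sylv_Suc_t p(2)[symmetric] by simp
    also have "\<dots> \<le> (\<Sum>i=t..k. sylv_excess k i)"
      using sylv_excess_two_le_sum assms(1) less.prems(1) by blast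
    finally show ?thesis .
  qed
qed

lemma sum_excess_le_of_le_half:
  assumes "3 \<le> k" "\<forall>a\<in>set xs. 0 < a \<and> a \<le> 1 / 2" "sum_list xs \<le> 1"
  shows "sum_list (map (excess k) xs) \<le> 3 / 2 - 3 / real k"
proof -
  define ys where "ys = filter (\<lambda>a. inv_floor a < k) xs"
  have ys: "\<forall>a\<in>set ys. 0 < a \<and> 2 \<le> inv_floor a \<and> inv_floor a < k"
    using assms(2) le_inv_floor_iff[of _ 2] unfolding ys_def by auto
  have "sum_list ys \<le> sum_list xs"
    using assms(2) unfolding ys_def by (intro sum_list_filter_le) auto
  then have sum_ys: "sum_list ys \<le> 1" using assms(3) by simp
  have k: "1 / real k \<le> 1 / 3" using assms(1) by (simp add: frac_le)
  have "sum_list (map (excess k) xs) = sum_list (map (excess k) ys)"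
    using sum_excess_filter_active assms(1) unfolding ys_def by simp
  also have "\<dots> \<le> 3 / 2 - 3 / real k"
  proof (cases "length ys \<le> 2")
    case True
    have "sum_list (map (excess k) ys) \<le> real (length ys) * max 0 (1 / 2 - 1 / real k)"
      using sum_excess_le_length[of 2 ys] ys by simp
    also have "\<dots> = real (length ys) * (1 / 2 - 1 / real k)"
      using k by simp
    also have "\<dots> \<le> 2 * (1 / 2 - 1 / real k)"
      using True k by (intro mult_right_mono) auto
    finally show ?thesis using k by simp
  next
    case False
    have "sum_list (map (excess k) ys) \<le> (1 + 1 / 2) * sum_list ys - real (length ys) / real k"
      using sum_excess_le_mass[of 2 ys] ys by simp
    also have "\<dots> \<le> (1 + 1 / 2) * 1 - 3 / real k"
      using False sum_ys by (intro diff_mono mult_left_mono divide_right_mono) auto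
    finally show ?thesis by simp
  qed
  finally show ?thesis .
qed

lemma sum_sylv_excess_ge:
  assumes "3 \<le> k"
  shows "3 / 2 - 2 / real k \<le> (\<Sum>i=1..k. sylv_excess k i)"
proof -
  have "sylv_excess k 1 = 1 - 1 / real k" "sylv_excess k 2 = 1 / 2 - 1 / real k"
    using assms by (simp_all add: sylv_excess_def numeral_2_eq_2 field_simps)
  then show ?thesis
    using sylv_excess_two_le_sum[of k 1] assms unfolding numeral_2_eq_2 by simp
qed

lemma lam_eq_sum_sylv_excess:
  assumes "1 \<le> k"
  shows "lam k = 1 + (\<Sum>i=1..k. sylv_excess k i)"
proof -
  have "lam k = (\<Sum>i=1..k. 1 / real k + sylv_excess k i)"
    unfolding lam_def sylv_excess_def by (intro sum.cong) (auto simp: max_def)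
  also have "\<dots> = 1 + (\<Sum>i=1..k. sylv_excess k i)"
    using assms by (simp add: sum.distrib)
  finally show ?thesis .
qed

lemma sum_w2_eq:
  assumes "3 \<le> k" "\<forall>a\<in>set I. 0 < a \<and> a \<le> 1"
  shows "sum_list (map (w2 k) I)
    = sum_list (map (excess k) I) + real (length (filter (\<lambda>a. a \<le> 1 / 2) I)) / real k"
proof -
  have "sum_list (map (w2 k) I) = (\<Sum>a\<leftarrow>I. excess k a + (if a \<le> 1 / 2 then 1 / real k else 0))"
    using assms w2_eq_excess by (intro arg_cong[where f = sum_list] map_cong) auto
  also have "\<dots> = sum_list (map (excess k) I) + (\<Sum>a\<leftarrow>filter (\<lambda>a. a \<le> 1 / 2) I. 1 / real k)"
    by (simp add: sum_list_addf sum_list_map_filter')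
  finally show ?thesis by (simp add: sum_list_triv)
qed

theorem lemma3:
  fixes k :: nat and I :: "real list"
  assumes "k \<ge> 3"
    and "length I \<le> k"
    and "\<forall>a \<in> set I. 0 < a \<and> a \<le> 1"
    and "sum_list I \<le> 1"
  shows "sum_list (map (w2 k) I) \<le> lam k - 1 / real k"
proof -
  have k: "1 \<le> k" using assms(1) by simp
  define T where "T = (\<Sum>i=1..k. sylv_excess k i)"
  define small where "small = filter (\<lambda>a. a \<le> 1 / 2) I"
  have w2_sum: "sum_list (map (w2 k) I) = sum_list (map (excess k) I) + real (length small) / real k"
    using sum_w2_eq[OF assms(1,3)] unfolding small_def .
  have lam: "lam k - 1 / real k = 1 - 1 / real k + T"
    using lam_eq_sum_sylv_excess[OF k] unfolding T_def by simp
  show ?thesis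
  proof (cases "length small < k")
    case True
    then have "real (length small) / real k \<le> 1 - 1 / real k"
      using k by (simp add: field_simps)
    moreover have "sum_list (map (excess k) I) \<le> T"
      using sum_excess_le_sum_sylv_excess[OF k order.refl] assms(3,4) unfolding T_def by simp
    ultimately show ?thesis using w2_sum lam by linarith
  next
    case False
    then have len: "length small = k"
      using assms(2) length_filter_le[of "\<lambda>a. a \<le> 1 / 2" I] unfolding small_def by linarith
    have "a \<le> 1 / 2" if "a \<in> set I" for a
      using length_filter_less[OF that, of "\<lambda>a. a \<le> 1 / 2"] len assms(2)
      unfolding small_def by force
    then have "\<forall>a\<in>set I. 0 < a \<and> a \<le> 1 / 2" using assms(3) by blast
    then have "sum_list (map (excess k) I) \<le> 3 / 2 - 3 / real k"
      using sum_excess_le_of_le_half assms(1,4) by blast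
    then show ?thesis using w2_sum lam len k sum_sylv_excess_ge[OF assms(1)] unfolding T_def by simp
  qed
qed

end
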